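(* Let $n\ge 6$ be even. Then the largest $3\cdot|E_{n-2}|$ elements of $E_n$ are exactly the elements of $$\{x+2^{n-1}: x\in E_{n-2}\}\cup\{x+5\cdot 2^{n-3}: x\in E_{n-2}\}\cup\{x+3\cdot 2^{n-2}: x\in E_{n-2}\},$$ and in increasing order they consist of the elements of $E_{n-2}$ shifted by $2^{n-1}$, followed by those shifted by $5\cdot2^{n-3}$, followed by those shifted by $3\cdot 2^{n-2}$ (the last block ending at $M_n=2^n-1$).
   Context: Let $D$ (OEIS A036991) be the set of nonnegative integers $m$ such that, reading the binary expansion of $m$ from the least significant bit to the most significant bit, at every point the number of 1's read so far is at least the number of 0's read so far. For $n\ge1$ let $M_n=2^n-1$ and let the $n$-level be $E_n=D\cap(M_{n-1},M_n]$, i.e. the elements of $D$ whose binary expansion has exactly $n$ digits. *)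

theory Defs
  imports Main
begin

fun bin_digits :: "nat \<Rightarrow> nat list" where
  "bin_digits m = (if m = 0 then [] else m mod 2 # bin_digits (m div 2))"

text \<open>The set D (OEIS A036991): reading from the least significant bit, every prefix
has at least as many 1s as 0s.\<close>
definition inD :: "nat \<Rightarrow> bool" where
  "inD m \<longleftrightarrow> (\<forall>k \<le> length (bin_digits m).
      length (filter (\<lambda>d. d = 0) (take k (bin_digits m)))
        \<le> length (filter (\<lambda>d. d = 1) (take k (bin_digits m))))"

definition Mn :: "nat \<Rightarrow> nat" where
  "Mn n = 2 ^ n - 1"

definition E :: "nat \<Rightarrow> nat set" where
  "E n = {m. inD m \<and> Mn (n - 1) < m \<and> m \<le> Mn n}"

end

theory Submission
  imports Defs
begin

text \<open>Let \<open>j = n - 3\<close>, which is odd. A number \<open>a + 2^j * t\<close> with \<open>a < 2^j\<close> and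
\<open>t \<in> {1, 5, 6, 7}\<close> lies in \<open>D\<close> exactly when the \<open>j\<close> trailing digits \<open>a\<close> (with leading
zeros) satisfy the prefix condition: being of odd length, they then end with strictly more 1s
than 0s, and the digits of \<open>t\<close> contain at most one 0, which cannot break the condition.
Hence \<open>t = 1\<close> describes \<open>E (n - 2)\<close>, and \<open>t = 5, 6, 7\<close> describe the parts of \<open>E n\<close> in
\<open>[5 * 2^j, 6 * 2^j)\<close>, \<open>[6 * 2^j, 7 * 2^j)\<close>, \<open>[7 * 2^j, 8 * 2^j)\<close>, which are the three shifts
of \<open>E (n - 2)\<close>.\<close>

text \<open>Unconditional unfolding of \<open>bin_digits\<close> does not terminate on non-numeral arguments.\<close>
declare bin_digits.simps [simp del]

definition count_zeros :: "nat list \<Rightarrow> nat" where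
  "count_zeros xs = length (filter (\<lambda>d. d = 0) xs)"

definition count_ones :: "nat list \<Rightarrow> nat" where
  "count_ones xs = length (filter (\<lambda>d. d = 1) xs)"

definition ballot :: "nat list \<Rightarrow> bool" where
  "ballot xs \<longleftrightarrow> (\<forall>k \<le> length xs. count_zeros (take k xs) \<le> count_ones (take k xs))"

lemma inD_iff_ballot: "inD m \<longleftrightarrow> ballot (bin_digits m)"
  unfolding inD_def ballot_def count_zeros_def count_ones_def ..

lemma count_zeros_append [simp]: "count_zeros (xs @ ys) = count_zeros xs + count_zeros ys"
  by (simp add: count_zeros_def)

lemma count_ones_append [simp]: "count_ones (xs @ ys) = count_ones xs + count_ones ys"
  by (simp add: count_ones_def)

lemma count_zeros_take_le: "count_zeros (take k xs) \<le> count_zeros xs"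
  by (metis append_take_drop_id count_zeros_append le_add1)

lemma count_zeros_add_count_ones:
  "set xs \<subseteq> {0, 1} \<Longrightarrow> count_zeros xs + count_ones xs = length xs"
  by (induction xs) (auto simp: count_zeros_def count_ones_def)

lemma ballot_replicate_one: "ballot (replicate k 1)"
  by (simp add: ballot_def count_zeros_def count_ones_def)

text \<open>The parity hypothesis is what makes the inequality strict at the end of \<open>xs\<close>.\<close>
lemma ballot_append_iff:
  assumes "set xs \<subseteq> {0, 1}" and "odd (length xs)" and "count_zeros ys \<le> 1"
  shows "ballot (xs @ ys) \<longleftrightarrow> ballot xs"
proof
  assume app: "ballot (xs @ ys)"
  show "ballot xs"
    unfolding ballot_def
  proof (intro allI impI)
    fix k assume "k \<le> length xs"
    then show "count_zeros (take k xs) \<le> count_ones (take k xs)"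
      using app[unfolded ballot_def, rule_format, of k] by simp
  qed
next
  assume xs: "ballot xs"
  have "count_zeros xs \<le> count_ones xs"
    using xs unfolding ballot_def by (metis order_refl take_all)
  moreover have "count_zeros xs \<noteq> count_ones xs"
  proof
    assume "count_zeros xs = count_ones xs"
    then have "length xs = 2 * count_ones xs"
      using count_zeros_add_count_ones[OF assms(1)] by simp
    then show False using assms(2) by simp
  qed
  ultimately have strict: "count_zeros xs < count_ones xs" by simp
  show "ballot (xs @ ys)"
    unfolding ballot_def
  proof (intro allI impI)
    fix k assume "k \<le> length (xs @ ys)"
    show "count_zeros (take k (xs @ ys)) \<le> count_ones (take k (xs @ ys))"
    proof (cases "k \<le> length xs")
      case True
      then show ?thesis using xs by (simp add: ballot_def)
    next
      case False
      have "count_zeros (take (k - length xs) ys) \<le> 1"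
        using count_zeros_take_le assms(3) le_trans by blast
      then show ?thesis using False strict by simp
    qed
  qed
qed

fun low_bits :: "nat \<Rightarrow> nat \<Rightarrow> nat list" where
  "low_bits 0 m = []"
| "low_bits (Suc j) m = m mod 2 # low_bits j (m div 2)"

lemma length_low_bits [simp]: "length (low_bits j m) = j"
  by (induction j arbitrary: m) auto

lemma set_low_bits_subset: "set (low_bits j m) \<subseteq> {0, 1}"
  by (induction j arbitrary: m) auto

lemma low_bits_mask: "low_bits j (2 ^ j - 1) = replicate j 1"
proof (induction j)
  case (Suc j)
  have "(1::nat) \<le> 2 ^ j" by simp
  then have "(2::nat) ^ Suc j - 1 = 2 * (2 ^ j - 1) + 1" by (simp only: power_Suc)
  then show ?case using Suc.IH by simp
qed simp

lemma bin_digits_add_mult_pow2: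
  assumes "a < 2 ^ j" and "0 < t"
  shows "bin_digits (a + 2 ^ j * t) = low_bits j a @ bin_digits t"
  using assms(1)
proof (induction j arbitrary: a)
  case (Suc j)
  have "a div 2 < 2 ^ j" using Suc.prems by simp
  moreover have "(a + 2 ^ Suc j * t) div 2 = a div 2 + 2 ^ j * t" by simp
  moreover have "(a + 2 ^ Suc j * t) mod 2 = a mod 2" by (simp add: mult.assoc)
  ultimately show ?case
    using Suc.IH assms(2) by (subst bin_digits.simps) simp
qed simp

lemma inD_add_mult_pow2_iff:
  assumes "odd j" and "a < 2 ^ j" and "0 < t" and "count_zeros (bin_digits t) \<le> 1"
  shows "inD (a + 2 ^ j * t) \<longleftrightarrow> ballot (low_bits j a)"
  using ballot_append_iff[OF set_low_bits_subset, of j a] assms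
  by (simp add: inD_iff_ballot bin_digits_add_mult_pow2)

lemma mem_E_Suc_iff: "m \<in> E (Suc k) \<longleftrightarrow> inD m \<and> 2 ^ k \<le> m \<and> m < 2 ^ Suc k"
proof -
  have "(0::nat) < 2 ^ k" by simp
  then show ?thesis unfolding E_def Mn_def by auto
qed

definition ballot_residues :: "nat \<Rightarrow> nat set" where
  "ballot_residues j = {a. a < 2 ^ j \<and> ballot (low_bits j a)}"

lemma E_inter_block:
  assumes "odd j" and "2 ^ l \<le> t" and "t < 2 ^ Suc l" and "count_zeros (bin_digits t) \<le> 1"
  shows "E (Suc (j + l)) \<inter> {2 ^ j * t..<2 ^ j * Suc t} = (\<lambda>a. a + 2 ^ j * t) ` ballot_residues j"
    (is "?lhs = ?rhs")
proof -
  have "0 < t" using assms(2) by (metis le_zero_eq not_gr0 power_not_zero zero_neq_numeral)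
  have lower: "2 ^ (j + l) \<le> 2 ^ j * t" using assms(2) by (simp add: power_add)
  have upper: "2 ^ j * Suc t \<le> 2 ^ Suc (j + l)"
    using mult_le_mono2[of "Suc t" "2 ^ Suc l" "2 ^ j"] assms(3) by (simp add: power_add)
  have inD_iff: "inD (a + 2 ^ j * t) \<longleftrightarrow> a \<in> ballot_residues j" if "a < 2 ^ j" for a
    using inD_add_mult_pow2_iff[OF assms(1) that \<open>0 < t\<close> assms(4)] that
    by (simp add: ballot_residues_def)
  show ?thesis
  proof (intro set_eqI iffI)
    fix m assume m: "m \<in> ?lhs"
    then have "m - 2 ^ j * t < 2 ^ j" and "m = (m - 2 ^ j * t) + 2 ^ j * t" by auto
    moreover have "inD m" using m by (simp add: mem_E_Suc_iff)
    ultimately show "m \<in> ?rhs" using inD_iff by (metis image_eqI)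
  next
    fix m assume "m \<in> ?rhs"
    then obtain a where a: "a \<in> ballot_residues j" and m: "m = a + 2 ^ j * t" by blast
    have "a < 2 ^ j" using a by (simp add: ballot_residues_def)
    then show "m \<in> ?lhs"
      using a m inD_iff lower upper by (auto simp: mem_E_Suc_iff)
  qed
qed

lemma bin_digits_small: "bin_digits 1 = [1]" "bin_digits 5 = [1, 0, 1]"
  "bin_digits 6 = [0, 1, 1]" "bin_digits 7 = [1, 1, 1]"
  by (simp_all add: bin_digits.simps)

lemma E_Suc_eq_image:
  assumes "odd j"
  shows "E (Suc j) = (\<lambda>a. a + 2 ^ j) ` ballot_residues j"
proof -
  have "count_zeros (bin_digits 1) \<le> 1" unfolding bin_digits_small count_zeros_def by simp
  then have "E (Suc j) \<inter> {2 ^ j * 1..<2 ^ j * Suc 1} = (\<lambda>a. a + 2 ^ j * 1) ` ballot_residues j"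
    using E_inter_block[OF assms, of 0 1] by simp
  moreover have "E (Suc j) \<subseteq> {2 ^ j * 1..<2 ^ j * Suc 1}" by (auto simp: mem_E_Suc_iff)
  ultimately show ?thesis by (simp add: Int_absorb2)
qed

lemma E_block_eq_shift:
  assumes "odd j" and "t \<in> {5, 6, 7}"
  shows "E (j + 3) \<inter> {2 ^ j * t..<2 ^ j * Suc t} = (\<lambda>x. x + 2 ^ j * (t - 1)) ` E (Suc j)"
proof -
  have "2 ^ 2 \<le> t" "t < 2 ^ Suc 2" "count_zeros (bin_digits t) \<le> 1"
    using assms(2) by (auto simp: bin_digits_small count_zeros_def)
  from E_inter_block[OF assms(1) this]
  have "E (j + 3) \<inter> {2 ^ j * t..<2 ^ j * Suc t} = (\<lambda>a. a + 2 ^ j * t) ` ballot_residues j"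
    by (simp add: numeral_3_eq_3)
  also have "\<dots> = (\<lambda>x. x + 2 ^ j * (t - 1)) ` E (Suc j)"
    unfolding E_Suc_eq_image[OF assms(1)] image_image
    using assms(2) by (intro image_cong) auto
  finally show ?thesis .
qed

lemma finite_E: "finite (E n)"
  unfolding E_def by (rule finite_subset[of _ "{..Mn n}"]) auto

lemma Mn_mem_E:
  assumes "0 < n"
  shows "Mn n \<in> E n"
proof -
  obtain k where n: "n = Suc k" using assms gr0_conv_Suc by blast
  have "bin_digits (Mn n) = bin_digits ((2 ^ k - 1) + 2 ^ k * 1)" by (simp add: n Mn_def mult_2)
  also have "\<dots> = replicate k 1 @ [1]"
    by (subst bin_digits_add_mult_pow2) (simp_all only: low_bits_mask bin_digits_small, simp_all)
  finally have "inD (Mn n)"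
    by (metis inD_iff_ballot ballot_replicate_one replicate_Suc replicate_append_same)
  then show ?thesis by (simp add: n mem_E_Suc_iff Mn_def)
qed

theorem proposition8:
  fixes n :: nat
  assumes "even n" and "n \<ge> 6"
  defines "A \<equiv> (\<lambda>x. x + 2 ^ (n - 1)) ` E (n - 2)"
      and "B \<equiv> (\<lambda>x. x + 5 * 2 ^ (n - 3)) ` E (n - 2)"
      and "C \<equiv> (\<lambda>x. x + 3 * 2 ^ (n - 2)) ` E (n - 2)"
  shows "A \<union> B \<union> C \<subseteq> E n
    \<and> card (A \<union> B \<union> C) = 3 * card (E (n - 2))
    \<and> (\<forall>x \<in> E n - (A \<union> B \<union> C). \<forall>y \<in> A \<union> B \<union> C. x < y)
    \<and> (\<forall>a \<in> A. \<forall>b \<in> B. a < b) \<and> (\<forall>b \<in> B. \<forall>c \<in> C. b < c)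
    \<and> Mn n \<in> C \<and> (\<forall>c \<in> C. c \<le> Mn n)"
proof -
  define j where "j = n - 3"
  have "odd j" and n: "n = j + 3" using assms(1,2) by (auto simp: j_def)
  let ?block = "\<lambda>t. E n \<inter> {2 ^ j * t..<2 ^ j * Suc t}"
  have A: "A = ?block 5"
    using E_block_eq_shift[OF \<open>odd j\<close>, of 5] by (simp add: A_def n power_add mult.commute)
  have B: "B = ?block 6"
    using E_block_eq_shift[OF \<open>odd j\<close>, of 6] by (simp add: B_def n mult.commute)
  have C: "C = ?block 7"
    using E_block_eq_shift[OF \<open>odd j\<close>, of 7] by (simp add: C_def n power_add mult.commute)
  have "card A = card (E (n - 2))" "card B = card (E (n - 2))" "card C = card (E (n - 2))"
    by (simp_all add: A_def B_def C_def card_image)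
  moreover have "A \<inter> B = {}" "(A \<union> B) \<inter> C = {}" "finite A" "finite B" "finite C"
    by (auto simp: A B C finite_E)
  ultimately have "card (A \<union> B \<union> C) = 3 * card (E (n - 2))"
    by (simp add: card_Un_disjoint)
  moreover have "E n \<subseteq> {..Mn n}" by (auto simp: E_def)
  moreover have "Mn n \<in> E n" by (simp add: n Mn_mem_E)
  moreover have "2 ^ j * 7 \<le> Mn n" "Mn n < 2 ^ j * 8"
    using zero_less_power[of "2::nat" j] by (simp_all add: n Mn_def power_add)
  ultimately show ?thesis
    unfolding A B C by (fastforce simp: subset_eq)
qed

end
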